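(* Let $G=(V,E)$ be a connected graph with positive edge costs $c:E\to\mathbb{R}_+$, let $\alpha\ge 1$, and let $(U,\complement{U})$ be an $\alpha$-approximate minimum cut of $G$. Then there exists a subset $S\subseteq U$ with $|S|\le\lfloor 2\alpha\rfloor+1$ such that $(U,\complement{U})$ is the unique minimum $(S,\complement{U})$-terminal cut.
   Context: A cut is a partition of $V$ into two non-empty parts; for $\emptyset\ne U\subsetneq V$ write $\complement{U}=V\setminus U$, $(U,\complement{U})$ for the corresponding cut, and $d(U)$ for the total cost of edges with exactly one endpoint in $U$. Let $\lambda=\min\{d(U):\emptyset\ne U\subsetneq V\}$. The cut $(U,\complement{U})$ is an $\alpha$-approximate minimum cut if $d(U)\le\alpha\lambda$. For disjoint non-empty $S,T\subseteq V$, a cut $(X,\complement{X})$ is an $(S,T)$-terminal cut if $S\subseteq X\subseteq V\setminus T$; a minimum $(S,T)$-terminal cut is one minimizing $d(X)$ among these. *)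

theory Defs
  imports Complex_Main
begin

definition graph :: "'a set \<Rightarrow> 'a set set \<Rightarrow> bool" where
  "graph V E \<longleftrightarrow> finite V \<and> (\<forall>e\<in>E. e \<subseteq> V \<and> card e = 2)"

definition adj_rel :: "'a set set \<Rightarrow> ('a \<times> 'a) set" where
  "adj_rel E = {(x, y). {x, y} \<in> E}"

definition connected_graph :: "'a set \<Rightarrow> 'a set set \<Rightarrow> bool" where
  "connected_graph V E \<longleftrightarrow> graph V E \<and> V \<noteq> {} \<and>
     (\<forall>u\<in>V. \<forall>v\<in>V. (u, v) \<in> (adj_rel E)\<^sup>*)"

definition cut_cost :: "'a set set \<Rightarrow> ('a set \<Rightarrow> real) \<Rightarrow> 'a set \<Rightarrow> real" where
  "cut_cost E c U = (\<Sum>e\<in>{e\<in>E. card (e \<inter> U) = 1}. c e)"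

definition is_cut :: "'a set \<Rightarrow> 'a set \<Rightarrow> bool" where
  "is_cut V U \<longleftrightarrow> U \<noteq> {} \<and> U \<subset> V"

definition min_cut_value :: "'a set \<Rightarrow> 'a set set \<Rightarrow> ('a set \<Rightarrow> real) \<Rightarrow> real" where
  "min_cut_value V E c = Min (cut_cost E c ` {U. is_cut V U})"

definition approx_min_cut ::
  "'a set \<Rightarrow> 'a set set \<Rightarrow> ('a set \<Rightarrow> real) \<Rightarrow> real \<Rightarrow> 'a set \<Rightarrow> bool" where
  "approx_min_cut V E c \<alpha> U \<longleftrightarrow> is_cut V U \<and> cut_cost E c U \<le> \<alpha> * min_cut_value V E c"

definition terminal_cut :: "'a set \<Rightarrow> 'a set \<Rightarrow> 'a set \<Rightarrow> 'a set \<Rightarrow> bool" where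
  "terminal_cut V S T X \<longleftrightarrow> S \<noteq> {} \<and> T \<noteq> {} \<and> S \<subseteq> V \<and> T \<subseteq> V \<and> S \<inter> T = {} \<and>
     is_cut V X \<and> S \<subseteq> X \<and> X \<subseteq> V - T"

definition unique_min_terminal_cut ::
  "'a set \<Rightarrow> 'a set set \<Rightarrow> ('a set \<Rightarrow> real) \<Rightarrow> 'a set \<Rightarrow> 'a set \<Rightarrow> 'a set \<Rightarrow> bool" where
  "unique_min_terminal_cut V E c S T X \<longleftrightarrow> terminal_cut V S T X \<and>
     (\<forall>Y. terminal_cut V S T Y \<and> Y \<noteq> X \<longrightarrow> cut_cost E c X < cut_cost E c Y)"

end

theory Submission
  imports Defs
begin

(* Take S inclusion-minimal such that U is the unique minimum (S, V - U)-terminal cut, and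
   suppose k = |S| >= 2.  Minimality yields for each u in S a set Y u with S - {u} <= Y u <= U,
   u not in Y u and d(Y u) <= d(U).  Put A x = {u in S. x not in Y u}.  The sets
   {x. A x = {u}} (u in S) are cuts, the sets {x. |A x| < j} (3 <= j <= k) are
   (S, V - U)-terminal cuts, and an edge {x, y} crosses them at most |sym_diff (A x) (A y)| times in
   total, which is exactly how often it crosses the Y u.  Hence
   k * lambda + (k - 2) * d(U) <= k * d(U), so k <= 2 d(U) / lambda <= 2 alpha. *)

lemma graph_finite_edges: "graph V E \<Longrightarrow> finite E"
  unfolding graph_def by (metis Pow_iff finite_Pow_iff finite_subset subsetI)

lemma card_doubleton_inter_eq_1_iff:
  "x \<noteq> y \<Longrightarrow> card ({x, y} \<inter> Z) = 1 \<longleftrightarrow> (x \<in> Z) \<noteq> (y \<in> Z)"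
  by (cases "x \<in> Z"; cases "y \<in> Z") auto

lemma connected_graph_crossing_edge:
  assumes "connected_graph V E" "is_cut V W"
  shows "\<exists>e\<in>E. card (e \<inter> W) = 1"
proof (rule ccontr)
  assume no_crossing: "\<not> ?thesis"
  have stays: "z \<in> W" if "y \<in> W" "{y, z} \<in> E" for y z
  proof (rule ccontr)
    assume "z \<notin> W"
    with \<open>y \<in> W\<close> have "card ({y, z} \<inter> W) = 1" by auto
    with no_crossing \<open>{y, z} \<in> E\<close> show False by blast
  qed
  obtain w v where "w \<in> W" "v \<in> V" "v \<notin> W"
    using assms(2) unfolding is_cut_def by blast
  then have "(w, v) \<in> (adj_rel E)\<^sup>*"
    using assms unfolding connected_graph_def is_cut_def by blast
  then have "v \<in> W"
    by (induction rule: rtrancl_induct) (use \<open>w \<in> W\<close> stays in \<open>auto simp: adj_rel_def\<close>)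
  with \<open>v \<notin> W\<close> show False by contradiction
qed

lemma cut_cost_pos:
  assumes "connected_graph V E" "\<forall>e\<in>E. c e > 0" "is_cut V W"
  shows "cut_cost E c W > 0"
proof -
  obtain e where e: "e \<in> E" "card (e \<inter> W) = 1"
    using connected_graph_crossing_edge[OF assms(1,3)] by blast
  have "finite E"
    using assms(1) graph_finite_edges unfolding connected_graph_def by blast
  then have "c e \<le> cut_cost E c W"
    unfolding cut_cost_def using e assms(2) by (intro member_le_sum) (auto simp: less_imp_le)
  with e assms(2) show ?thesis by fastforce
qed

lemma finite_cuts: "finite V \<Longrightarrow> finite {W. is_cut V W}"
  unfolding is_cut_def by (auto intro: finite_subset[of _ "Pow V"])

lemma min_cut_value_le:
  assumes "graph V E" "is_cut V W"
  shows "min_cut_value V E c \<le> cut_cost E c W"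
proof -
  have "finite {W. is_cut V W}"
    using assms(1) finite_cuts unfolding graph_def by blast
  with assms(2) show ?thesis
    unfolding min_cut_value_def by (intro Min_le) auto
qed

lemma min_cut_value_pos:
  assumes "connected_graph V E" "\<forall>e\<in>E. c e > 0" "is_cut V U"
  shows "min_cut_value V E c > 0"
proof -
  have "finite {W. is_cut V W}"
    using assms(1) finite_cuts unfolding connected_graph_def graph_def by blast
  then have "min_cut_value V E c \<in> cut_cost E c ` {W. is_cut V W}"
    unfolding min_cut_value_def using assms(3) by (intro Min_in) auto
  with cut_cost_pos[OF assms(1,2)] show ?thesis by auto
qed

lemma sum_cut_cost_eq_sum_crossings:
  assumes "finite E" "finite I"
  shows "(\<Sum>i\<in>I. cut_cost E c (F i)) = (\<Sum>e\<in>E. c e * card {i\<in>I. card (e \<inter> F i) = 1})"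
proof -
  have "(\<Sum>i\<in>I. cut_cost E c (F i)) = (\<Sum>i\<in>I. \<Sum>e\<in>E. if card (e \<inter> F i) = 1 then c e else 0)"
    unfolding cut_cost_def using assms(1) by (simp add: sum.inter_filter)
  also have "\<dots> = (\<Sum>e\<in>E. \<Sum>i\<in>I. if card (e \<inter> F i) = 1 then c e else 0)"
    by (rule sum.swap)
  also have "\<dots> = (\<Sum>e\<in>E. c e * card {i\<in>I. card (e \<inter> F i) = 1})"
    using assms(2) by (simp add: sum.If_cases Int_def mult.commute)
  finally show ?thesis .
qed

lemma card_Collect_singleton_eq: "card {u. A = {u}} = of_bool (card A = 1)"
proof (cases "card A = 1")
  case True
  then obtain w where "A = {w}" by (rule card_1_singletonE)
  then show ?thesis by simp
next
  case False
  then have "{u. A = {u}} = {}" by auto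
  with False show ?thesis by simp
qed

lemma card_singleton_changes_plus_threshold_changes_le:
  assumes "finite A" "finite B"
  shows "card {u. (A = {u}) \<noteq> (B = {u})} + card {j\<in>{3..n}. (card A < j) \<noteq> (card B < j)}
    \<le> card (sym_diff A B)"
proof -
  have ordered: "card {u. (A = {u}) \<noteq> (B = {u})} + card {j\<in>{3..n}. (card A < j) \<noteq> (card B < j)}
    \<le> card (A - B) + card (B - A)" if "finite A" "finite B" "card A \<le> card B" for A B :: "'a set"
  proof (cases "A = B")
    case False
    define i where "i = card (A \<inter> B)"
    have diffs: "card (A - B) = card A - i" "card (B - A) = card B - i"
      unfolding i_def using that by (simp_all add: card_Diff_subset_Int Int_commute)
    have "i \<le> card A" "i \<le> card B"
      unfolding i_def using that by (simp_all add: card_mono)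
    have "i < card B"
    proof (rule ccontr)
      assume "\<not> i < card B"
      then have "card (A \<inter> B) = card B" "card (A \<inter> B) = card A"
        using that(3) \<open>i \<le> card A\<close> \<open>i \<le> card B\<close> unfolding i_def by linarith+
      then have "A \<inter> B = B" "A \<inter> B = A"
        using that(1,2) by (simp_all add: card_subset_eq)
      with False show False by simp
    qed
    have "card {u. (A = {u}) \<noteq> (B = {u})} \<le> card ({u. A = {u}} \<union> {u. B = {u}})"
      using that by (intro card_mono) (auto intro: finite_subset[of _ A] finite_subset[of _ B])
    also have "\<dots> \<le> of_bool (card A = 1) + of_bool (card B = 1)"
      using card_Un_le card_Collect_singleton_eq by metis
    finally have singletons:
      "card {u. (A = {u}) \<noteq> (B = {u})} \<le> of_bool (card A = 1) + of_bool (card B = 1)" .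
    have "card {j\<in>{3..n}. (card A < j) \<noteq> (card B < j)} \<le> card {max 3 (card A + 1)..card B}"
      using that by (intro card_mono) auto
    then have thresholds: "card {j\<in>{3..n}. (card A < j) \<noteq> (card B < j)} \<le> card B - max 2 (card A)"
      by simp
    have "of_bool (card A = 1) + of_bool (card B = 1) + (card B - max 2 (card A))
      \<le> card (A - B) + card (B - A)"
      unfolding diffs using that(3) \<open>i \<le> card A\<close> \<open>i < card B\<close> by (auto simp: max_def)
    with singletons thresholds show ?thesis by linarith
  qed simp
  have "card (sym_diff A B) = card (A - B) + card (B - A)"
    using assms by (intro card_Un_disjoint) auto
  moreover have "card {u. (A = {u}) \<noteq> (B = {u})} + card {j\<in>{3..n}. (card A < j) \<noteq> (card B < j)}
    \<le> card (A - B) + card (B - A)"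
  proof (cases "card A \<le> card B")
    case False
    have "{u. (B = {u}) \<noteq> (A = {u})} = {u. (A = {u}) \<noteq> (B = {u})}"
      "{j\<in>{3..n}. (card B < j) \<noteq> (card A < j)} = {j\<in>{3..n}. (card A < j) \<noteq> (card B < j)}"
      by auto
    then show ?thesis using ordered[of B A] assms False by simp
  qed (use ordered assms in simp)
  ultimately show ?thesis by simp
qed

lemma sum_cut_cost_level_sets_le:
  fixes Y :: "'b \<Rightarrow> 'a set"
  assumes "graph V E" "\<forall>e\<in>E. c e \<ge> 0" "finite S"
  defines "A \<equiv> \<lambda>x. {u\<in>S. x \<notin> Y u}"
  shows "(\<Sum>u\<in>S. cut_cost E c {x\<in>V. A x = {u}})
      + (\<Sum>j\<in>{3..card S}. cut_cost E c {x\<in>V. card (A x) < j})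
    \<le> (\<Sum>u\<in>S. cut_cost E c (Y u))"
proof -
  have per_edge: "card {u\<in>S. card (e \<inter> {x\<in>V. A x = {u}}) = 1}
      + card {j\<in>{3..card S}. card (e \<inter> {x\<in>V. card (A x) < j}) = 1}
    \<le> card {u\<in>S. card (e \<inter> Y u) = 1}" if "e \<in> E" for e
  proof -
    have "e \<subseteq> V" "card e = 2"
      using that assms(1) unfolding graph_def by auto
    then obtain x y where e: "e = {x, y}" "x \<noteq> y" "x \<in> V" "y \<in> V"
      by (auto simp: card_2_iff)
    have crosses: "card (e \<inter> Z) = 1 \<longleftrightarrow> (x \<in> Z) \<noteq> (y \<in> Z)" for Z
      using e card_doubleton_inter_eq_1_iff by simp
    have "{u\<in>S. card (e \<inter> {x\<in>V. A x = {u}}) = 1} = {u. (A x = {u}) \<noteq> (A y = {u})}"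
      unfolding crosses A_def using e(3,4) by auto
    moreover have "{j\<in>{3..card S}. card (e \<inter> {x\<in>V. card (A x) < j}) = 1}
      = {j\<in>{3..card S}. (card (A x) < j) \<noteq> (card (A y) < j)}"
      unfolding crosses using e(3,4) by simp
    moreover have "{u\<in>S. card (e \<inter> Y u) = 1} = sym_diff (A x) (A y)"
      unfolding crosses A_def by blast
    moreover have "finite (A z)" for z
      unfolding A_def using assms(3) by simp
    ultimately show ?thesis
      using card_singleton_changes_plus_threshold_changes_le[of "A x" "A y" "card S"] by simp
  qed
  have "finite E"
    using assms(1) by (rule graph_finite_edges)
  then have "(\<Sum>u\<in>S. cut_cost E c {x\<in>V. A x = {u}})
      + (\<Sum>j\<in>{3..card S}. cut_cost E c {x\<in>V. card (A x) < j})
    = (\<Sum>e\<in>E. c e * (card {u\<in>S. card (e \<inter> {x\<in>V. A x = {u}}) = 1}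
      + card {j\<in>{3..card S}. card (e \<inter> {x\<in>V. card (A x) < j}) = 1}))"
    using assms(3) by (simp add: sum_cut_cost_eq_sum_crossings sum.distrib distrib_left)
  also have "\<dots> \<le> (\<Sum>e\<in>E. c e * card {u\<in>S. card (e \<inter> Y u) = 1})"
    using per_edge assms(2) by (intro sum_mono mult_left_mono) (simp_all only: of_nat_le_iff)
  also have "\<dots> = (\<Sum>u\<in>S. cut_cost E c (Y u))"
    using \<open>finite E\<close> assms(3) by (simp add: sum_cut_cost_eq_sum_crossings)
  finally show ?thesis .
qed

lemma unique_min_terminal_cut_self: "is_cut V U \<Longrightarrow> unique_min_terminal_cut V E c U (V - U) U"
  unfolding unique_min_terminal_cut_def terminal_cut_def is_cut_def by auto

lemma terminal_cut_intermediate: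
  assumes "terminal_cut V S T U" "S \<subseteq> X" "X \<subseteq> V - T"
  shows "terminal_cut V S T X"
  using assms unfolding terminal_cut_def is_cut_def by auto

lemma cheap_cut_missing_terminal:
  assumes "unique_min_terminal_cut V E c S T U"
    and "\<not> unique_min_terminal_cut V E c (S - {u}) T U" "u \<in> S" "S - {u} \<noteq> {}"
  obtains Y where "S - {u} \<subseteq> Y" "Y \<subseteq> V - T" "u \<notin> Y" "cut_cost E c Y \<le> cut_cost E c U"
proof -
  have "terminal_cut V (S - {u}) T U"
    using assms(1,4) unfolding unique_min_terminal_cut_def terminal_cut_def by blast
  then obtain Y where Y: "terminal_cut V (S - {u}) T Y" "Y \<noteq> U" "\<not> cut_cost E c U < cut_cost E c Y"
    using assms(2) unfolding unique_min_terminal_cut_def by blast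
  have "u \<notin> Y"
  proof
    assume "u \<in> Y"
    with Y(1) assms(1) have "terminal_cut V S T Y"
      unfolding unique_min_terminal_cut_def terminal_cut_def by auto
    with Y(2,3) assms(1) show False
      unfolding unique_min_terminal_cut_def by simp
  qed
  with Y show thesis
    by (intro that) (simp_all add: terminal_cut_def not_less)
qed

lemma level_set_cut_costs_ge:
  assumes graph: "graph V E"
    and unique: "unique_min_terminal_cut V E c S T U"
    and "2 \<le> card S"
    and Y: "\<And>u. u \<in> S \<Longrightarrow> S - {u} \<subseteq> Y u \<and> Y u \<subseteq> V - T \<and> u \<notin> Y u"
  defines "A \<equiv> \<lambda>x. {u\<in>S. x \<notin> Y u}"
  shows "card S * min_cut_value V E c + (real (card S) - 2) * cut_cost E c U
    \<le> (\<Sum>u\<in>S. cut_cost E c {x\<in>V. A x = {u}})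
      + (\<Sum>j\<in>{3..card S}. cut_cost E c {x\<in>V. card (A x) < j})"
proof -
  have tc: "terminal_cut V S T U"
    using unique unfolding unique_min_terminal_cut_def by simp
  have A_terminal: "A u = {u}" if "u \<in> S" for u
    using Y that unfolding A_def by auto
  have A_sink: "A x = S" if "x \<in> T" for x
    using Y that unfolding A_def by auto
  have "min_cut_value V E c \<le> cut_cost E c {x\<in>V. A x = {u}}" if "u \<in> S" for u
  proof -
    have "S \<noteq> {u}"
      using assms(3) by auto
    then have "{x\<in>V. A x = {u}} \<inter> T = {}"
      using A_sink by auto
    moreover have "u \<in> {x\<in>V. A x = {u}}"
      using A_terminal that tc unfolding terminal_cut_def by auto
    ultimately have "is_cut V {x\<in>V. A x = {u}}"
      using tc unfolding terminal_cut_def is_cut_def by auto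
    then show ?thesis
      by (rule min_cut_value_le[OF graph])
  qed
  then have "card S * min_cut_value V E c \<le> (\<Sum>u\<in>S. cut_cost E c {x\<in>V. A x = {u}})"
    using sum_mono[of S "\<lambda>x. min_cut_value V E c"] by simp
  moreover have "cut_cost E c U \<le> cut_cost E c {x\<in>V. card (A x) < j}" if "j \<in> {3..card S}" for j
  proof -
    have "S \<subseteq> {x\<in>V. card (A x) < j}"
      using tc that A_terminal unfolding terminal_cut_def by auto
    moreover have "{x\<in>V. card (A x) < j} \<subseteq> V - T"
      using that A_sink by auto
    ultimately have "terminal_cut V S T {x\<in>V. card (A x) < j}"
      by (rule terminal_cut_intermediate[OF tc])
    with unique show ?thesis
      unfolding unique_min_terminal_cut_def by (cases "{x\<in>V. card (A x) < j} = U") auto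
  qed
  then have "(real (card S) - 2) * cut_cost E c U
    \<le> (\<Sum>j\<in>{3..card S}. cut_cost E c {x\<in>V. card (A x) < j})"
    using sum_mono[of "{3..card S}" "\<lambda>j. cut_cost E c U"] assms(3) by simp
  ultimately show ?thesis
    by linarith
qed

lemma exists_minimal_terminal_set:
  assumes "finite V" "unique_min_terminal_cut V E c S0 T U"
  obtains S where "unique_min_terminal_cut V E c S T U"
    "\<And>S'. S' \<subset> S \<Longrightarrow> \<not> unique_min_terminal_cut V E c S' T U"
proof -
  obtain S where S: "unique_min_terminal_cut V E c S T U"
    and least: "\<And>S'. unique_min_terminal_cut V E c S' T U \<Longrightarrow> card S \<le> card S'"
    using ex_has_least_nat[of "\<lambda>S. unique_min_terminal_cut V E c S T U" S0 card] assms(2) by blast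
  have "finite S"
    using S assms(1) finite_subset unfolding unique_min_terminal_cut_def terminal_cut_def by blast
  then have "\<not> unique_min_terminal_cut V E c S' T U" if "S' \<subset> S" for S'
    using least[of S'] psubset_card_mono[OF _ that] by fastforce
  with S show thesis
    by (rule that)
qed

lemma card_minimal_terminal_set_le:
  assumes "connected_graph V E" "\<forall>e\<in>E. c e > 0"
    and unique: "unique_min_terminal_cut V E c S T U"
    and minimal: "\<And>S'. S' \<subset> S \<Longrightarrow> \<not> unique_min_terminal_cut V E c S' T U"
    and "2 \<le> card S"
  shows "card S * min_cut_value V E c \<le> 2 * cut_cost E c U"
proof -
  have graph: "graph V E"
    using assms(1) unfolding connected_graph_def by simp
  have "finite S"
    using assms(5) card.infinite by fastforce
  have "\<exists>Y. S - {u} \<subseteq> Y \<and> Y \<subseteq> V - T \<and> u \<notin> Y \<and> cut_cost E c Y \<le> cut_cost E c U"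
    if u: "u \<in> S" for u
  proof -
    have "card (S - {u}) \<noteq> 0"
      using assms(5) u \<open>finite S\<close> by simp
    then have "S - {u} \<noteq> {}"
      by (metis card.empty)
    moreover have "\<not> unique_min_terminal_cut V E c (S - {u}) T U"
      using u by (intro minimal) auto
    ultimately show ?thesis
      using cheap_cut_missing_terminal[OF unique _ u] by metis
  qed
  then obtain Y where Y: "\<And>u. u \<in> S \<Longrightarrow>
      S - {u} \<subseteq> Y u \<and> Y u \<subseteq> V - T \<and> u \<notin> Y u \<and> cut_cost E c (Y u) \<le> cut_cost E c U"
    by metis
  have "(\<Sum>u\<in>S. cut_cost E c (Y u)) \<le> card S * cut_cost E c U"
    using sum_mono[of S "\<lambda>u. cut_cost E c (Y u)" "\<lambda>u. cut_cost E c U"] Y by simp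
  with level_set_cut_costs_ge[OF graph unique assms(5), of Y]
    sum_cut_cost_level_sets_le[OF graph _ \<open>finite S\<close>, of c Y] assms(2) Y
  show ?thesis
    by (simp add: less_imp_le left_diff_distrib)
qed

lemma le_floor_double_add_one:
  fixes \<alpha> :: real and k :: nat
  assumes "1 \<le> \<alpha>" "2 \<le> k \<Longrightarrow> k \<le> 2 * \<alpha>"
  shows "real k \<le> of_int \<lfloor>2 * \<alpha>\<rfloor> + 1"
proof (cases "2 \<le> k")
  case True
  then have "int k \<le> \<lfloor>2 * \<alpha>\<rfloor>"
    using assms(2) by (simp add: le_floor_iff)
  then show ?thesis
    by linarith
next
  case False
  moreover have "2 \<le> \<lfloor>2 * \<alpha>\<rfloor>"
    using assms(1) by (simp add: le_floor_iff)
  ultimately show ?thesis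
    by linarith
qed

theorem theorem2p1:
  fixes V :: "'a set" and E :: "'a set set" and c :: "'a set \<Rightarrow> real"
    and \<alpha> :: real and U :: "'a set"
  assumes "connected_graph V E"
    and "\<forall>e\<in>E. c e > 0"
    and "\<alpha> \<ge> 1"
    and "approx_min_cut V E c \<alpha> U"
  shows "\<exists>S. S \<subseteq> U \<and> real (card S) \<le> of_int \<lfloor>2 * \<alpha>\<rfloor> + 1 \<and>
             unique_min_terminal_cut V E c S (V - U) U"
proof -
  have cut: "is_cut V U" and approx: "cut_cost E c U \<le> \<alpha> * min_cut_value V E c"
    using assms(4) unfolding approx_min_cut_def by auto
  have "finite V"
    using assms(1) unfolding connected_graph_def graph_def by simp
  obtain S where S: "unique_min_terminal_cut V E c S (V - U) U"
    and minimal: "\<And>S'. S' \<subset> S \<Longrightarrow> \<not> unique_min_terminal_cut V E c S' (V - U) U"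
    using exists_minimal_terminal_set[OF \<open>finite V\<close> unique_min_terminal_cut_self[OF cut]] by blast
  have bound: "card S \<le> 2 * \<alpha>" if "2 \<le> card S"
  proof -
    have "card S * min_cut_value V E c \<le> 2 * \<alpha> * min_cut_value V E c"
      using card_minimal_terminal_set_le[OF assms(1,2) S minimal that] approx by linarith
    then show ?thesis
      using min_cut_value_pos[OF assms(1,2) cut] by simp
  qed
  have "real (card S) \<le> of_int \<lfloor>2 * \<alpha>\<rfloor> + 1"
    using le_floor_double_add_one[OF assms(3) bound] .
  moreover have "S \<subseteq> U"
    using S unfolding unique_min_terminal_cut_def terminal_cut_def by blast
  ultimately show ?thesis
    using S by blast
qed

end
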